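(* Let $m,n\ge 3$ with $m\neq n$. Let $\circ$ be any one of the four boolean operations union ($\cup$), intersection ($\cap$), difference ($\setminus$) and symmetric difference ($\oplus$). Then the state complexity of $U_m(a,b,\emptyset)\circ U_n(a,b,\emptyset)$ is exactly $mn$.
   Context: The state complexity of a regular language is the number of states of its minimal complete deterministic finite automaton (DFA). For $n\ge 3$, $\mathcal{U}_n(a,b,\emptyset)$ is the DFA over alphabet $\{a,b\}$ with state set $\{0,\dots,n-1\}$, initial state $0$, set of final states $\{n-1\}$, where input $a$ maps $i\mapsto i+1 \pmod n$ (a cycle of all states) and input $b$ swaps states $0$ and $1$ and fixes all other states. $U_n(a,b,\emptyset)$ is the language accepted by $\mathcal{U}_n(a,b,\emptyset)$. For languages $K,L$: $K\setminus L$ is set difference and $K\oplus L=(K\setminus L)\cup(L\setminus K)$. *)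

theory Defs
  imports Main
begin

datatype letter = LA | LB

text \<open>A complete DFA with k states, represented (up to renaming) by the state set {0..<k}:
  transition function delta, initial state q0, final states F.\<close>
definition is_dfa_for :: "nat \<Rightarrow> (nat \<Rightarrow> letter \<Rightarrow> nat) \<Rightarrow> nat \<Rightarrow> nat set \<Rightarrow> letter list set \<Rightarrow> bool" where
  "is_dfa_for k delta q0 F L \<longleftrightarrow>
     q0 < k \<and> (\<forall>q<k. \<forall>x. delta q x < k) \<and> F \<subseteq> {..<k} \<and>
     L = {w. foldl delta q0 w \<in> F}"

definition state_complexity :: "letter list set \<Rightarrow> nat" where
  "state_complexity L = (LEAST k. \<exists>delta q0 F. is_dfa_for k delta q0 F L)"

definition U_delta :: "nat \<Rightarrow> nat \<Rightarrow> letter \<Rightarrow> nat" where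
  "U_delta n i x = (case x of
       LA \<Rightarrow> (i + 1) mod n
     | LB \<Rightarrow> (if i = 0 then 1 else if i = 1 then 0 else i))"

definition U_lang :: "nat \<Rightarrow> letter list set" where
  "U_lang n = {w. foldl (U_delta n) 0 w = n - 1}"

definition symdiff :: "'a set \<Rightarrow> 'a set \<Rightarrow> 'a set" where
  "symdiff K L = (K - L) \<union> (L - K)"

end

theory Submission
  imports Defs "HOL-Number_Theory.Cong"
begin

(* The language U_m o U_n (o a boolean operation) is accepted by the product of the
   two automata, which has mn states; the work is the matching lower bound.  Both
   letters of U_n act as permutations of {0..<n}, so the product automaton is a
   permutation automaton.  Assume s < l.  The word a^(s*l-k) b a^k acts as the
   transposition (k k+1) in both U_s and U_l;
   combining two of them gives a word which fixes every state of U_s and advances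
   a chosen state of U_l by one.  Hence every pair of states is reachable
   (lemma reach).  Using reachability, any two distinct product states are
   separated by some word as soon as the operation depends on both arguments
   (lemma distinguish), and the Myhill-Nerode argument turns the mn reachable,
   pairwise distinguishable states into a lower bound on the size of every DFA. *)

lemma mod_add_right_cancel: "(a + k) mod N = (b + k) mod (N::nat) \<longleftrightarrow> a mod N = b mod N"
  using cong_add_rcancel_nat[of a k b N] by (simp add: cong_def)

lemma mod_Suc_neq: "(N::nat) \<ge> 2 \<Longrightarrow> (k + 1) mod N \<noteq> k mod N"
  using mod_add_right_cancel[of 1 k N 0] by (simp add: add.commute)

lemma U_delta_lt: "N \<ge> 2 \<Longrightarrow> i < N \<Longrightarrow> U_delta N i x < N"
  by (cases x) (auto simp: U_delta_def)

lemma foldl_U_lt: "N \<ge> 2 \<Longrightarrow> i < N \<Longrightarrow> foldl (U_delta N) i w < N"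
  by (induction w arbitrary: i) (auto simp: U_delta_lt)

(* Both letters act on {0..<n} as permutations (a is a cycle, b a transposition),
   hence injectively; consequently so does every word. *)
lemma U_delta_inj:
  assumes "N \<ge> 2" "i < N" "i' < N" "U_delta N i x = U_delta N i' x"
  shows "i = i'"
proof (cases x)
  case LA
  then have "(i + 1) mod N = (i' + 1) mod N" using assms by (simp add: U_delta_def)
  then show ?thesis using assms mod_add_right_cancel[of i 1 N i'] by simp
next
  case LB
  then show ?thesis using assms by (auto simp: U_delta_def split: if_splits)
qed

lemma foldl_U_inj:
  "N \<ge> 2 \<Longrightarrow> i < N \<Longrightarrow> i' < N \<Longrightarrow> foldl (U_delta N) i w = foldl (U_delta N) i' w \<Longrightarrow> i = i'"
proof (induction w arbitrary: i i')
  case (Cons x w)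
  then have "U_delta N i x = U_delta N i' x" using U_delta_lt by simp
  then show ?case using Cons.prems U_delta_inj by blast
qed simp

lemma foldl_U_replicate_LA: "i < N \<Longrightarrow> foldl (U_delta N) i (replicate r LA) = (i + r) mod N"
proof (induction r arbitrary: i)
  case (Suc r)
  have "foldl (U_delta N) i (replicate (Suc r) LA) = foldl (U_delta N) ((i + 1) mod N) (replicate r LA)"
    by (simp add: U_delta_def)
  also have "\<dots> = ((i + 1) mod N + r) mod N"
    using Suc by simp
  finally show ?case by (simp add: mod_add_left_eq)
qed simp

definition swap_at :: "nat \<Rightarrow> nat \<Rightarrow> nat \<Rightarrow> nat" where
  "swap_at N k i = (if i = k mod N then (k + 1) mod N else if i = (k + 1) mod N then k mod N else i)"

lemma swap_at_lt: "N > 0 \<Longrightarrow> i < N \<Longrightarrow> swap_at N k i < N"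
  by (simp add: swap_at_def)

lemma swap_at_involution: "N \<ge> 2 \<Longrightarrow> i < N \<Longrightarrow> swap_at N k (swap_at N k i) = i"
  using mod_Suc_neq[of N k] by (auto simp: swap_at_def)

lemma swap_at_periodic: "swap_at N (k + N) = swap_at N k"
proof -
  have "(k + N + 1) mod N = (k + 1) mod N"
    using mod_add_self2[of "k + 1" N] by (simp add: ac_simps)
  then show ?thesis by (intro ext) (simp only: swap_at_def mod_add_self2)
qed

lemma U_delta_LB: "N \<ge> 2 \<Longrightarrow> i < N \<Longrightarrow> U_delta N i LB = swap_at N 0 i"
  by (simp add: U_delta_def swap_at_def)

lemma swap_at_shift:
  assumes "N \<ge> 2" "i < N"
  shows "swap_at N k ((i + k) mod N) = (swap_at N 0 i + k) mod N"
proof -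
  consider "i = 0" | "i = 1" | "i \<ge> 2" by linarith
  then show ?thesis
  proof cases
    case 3
    have "(i + k) mod N \<noteq> (0 + k) mod N" "(i + k) mod N \<noteq> (1 + k) mod N"
      using assms 3 by (simp_all only: mod_add_right_cancel) simp_all
    then show ?thesis using assms 3 by (simp add: swap_at_def add.commute)
  qed (use assms mod_Suc_neq[of N k] in \<open>auto simp: swap_at_def add.commute\<close>)
qed

(* For N dividing L, the word a^(L-k) b a^k = a^(-k) b a^k transposes k and k + 1
   (modulo N); the same word does so simultaneously in every U_N with N dividing L. *)
definition swap_word :: "nat \<Rightarrow> nat \<Rightarrow> letter list" where
  "swap_word L k = replicate (L - k) LA @ [LB] @ replicate k LA"

lemma swap_word_act:
  assumes "N \<ge> 2" "N dvd L" "k \<le> L" "i < N"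
  shows "foldl (U_delta N) i (swap_word L k) = swap_at N k i"
proof -
  define p where "p = (i + (L - k)) mod N"
  have "p < N" using assms by (simp add: p_def)
  have "foldl (U_delta N) i (swap_word L k) = (swap_at N 0 p + k) mod N"
    using assms \<open>p < N\<close> swap_at_lt[of N p 0]
    by (simp add: swap_word_def foldl_U_replicate_LA U_delta_LB p_def)
  also have "\<dots> = swap_at N k ((p + k) mod N)"
    using assms \<open>p < N\<close> by (simp add: swap_at_shift)
  also have "(p + k) mod N = (i + L) mod N"
    using assms by (simp add: p_def mod_add_left_eq)
  also have "\<dots> = i"
    using assms by (auto elim!: dvdE)
  finally show ?thesis .
qed

(* For s < l, the word incr_word s l d applies the transpositions (d d+1) and
   (d+s d+s+1).  In U_s these coincide and cancel, while in U_l the second one does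
   not touch d + 1 (as 1 < s < l), so d is moved to d + 1: the second component can
   be advanced without disturbing the first. *)
definition incr_word :: "nat \<Rightarrow> nat \<Rightarrow> nat \<Rightarrow> letter list" where
  "incr_word s l d = swap_word (s * l) d @ swap_word (s * l) (d + s)"

(* Both swap words in incr_word s l d are well formed, i.e. d + s <= s * l. *)
lemma incr_word_bound: "3 \<le> (s::nat) \<Longrightarrow> s < l \<Longrightarrow> d < l \<Longrightarrow> d + s \<le> s * l"
  using mult_le_mono1[of 3 s l] by linarith

lemma incr_word_first:
  assumes "3 \<le> s" "s < l" "d < l" "i < s"
  shows "foldl (U_delta s) i (incr_word s l d) = i"
proof -
  have "foldl (U_delta s) i (incr_word s l d) = swap_at s (d + s) (swap_at s d i)"
    using assms incr_word_bound[OF assms(1-3)] swap_at_lt[of s i d]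
    by (simp add: incr_word_def swap_word_act)
  also have "\<dots> = i" using assms by (simp add: swap_at_periodic swap_at_involution)
  finally show ?thesis .
qed

lemma incr_word_second:
  assumes "3 \<le> s" "s < l" "d < l" "j < l"
  shows "foldl (U_delta l) j (incr_word s l d) = swap_at l (d + s) (swap_at l d j)"
  using assms incr_word_bound[OF assms(1-3)] swap_at_lt[of l j d]
  by (simp add: incr_word_def swap_word_act)

lemma incr_word_step:
  assumes "3 \<le> s" "s < l" "j < l"
  shows "foldl (U_delta l) j (incr_word s l j) = (j + 1) mod l"
proof -
  have "(1 + j) mod l \<noteq> (s + j) mod l" "(0 + (j + 1)) mod l \<noteq> (s + (j + 1)) mod l"
    using assms by (simp_all only: mod_add_right_cancel) simp_all
  then have "(j + 1) mod l \<noteq> (j + s) mod l" "(j + 1) mod l \<noteq> (j + s + 1) mod l"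
    by (simp_all add: ac_simps)
  then show ?thesis using incr_word_second[OF assms(1,2,3,3)] assms by (simp add: swap_at_def)
qed

(* A word fixing U_s pointwise and the state 0 of U_l, which moves a given nonzero
   state of U_l away from the final state l - 1 (needed for operations like xor).
   If the state is l - 1 itself, incr_word s l (l - 2) does the job. *)
lemma avoid_final:
  assumes "3 \<le> s" "s < l" "q < l" "q \<noteq> 0"
  shows "\<exists>u. (\<forall>i<s. foldl (U_delta s) i u = i) \<and> foldl (U_delta l) 0 u = 0
             \<and> foldl (U_delta l) q u \<noteq> l - 1"
proof (cases "q = l - 1")
  case True
  have e: "l - 2 + s = (s - 2) + l" "(s - 2) + l + 1 = (s - 1) + l"
    using assms by simp_all
  have m2: "(l - 2 + s) mod l = s - 2" "(l - 2 + s + 1) mod l = s - 1"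
    unfolding e mod_add_self2 using assms by simp_all
  have m1: "(l - 2) mod l = l - 2" "(l - 2 + 1) mod l = l - 1"
    using assms by simp_all
  have "swap_at l (l - 2 + s) (swap_at l (l - 2) 0) = 0"
    "swap_at l (l - 2 + s) (swap_at l (l - 2) (l - 1)) \<noteq> l - 1"
    unfolding swap_at_def m1 m2 using assms by auto
  then show ?thesis
    using assms True incr_word_first[of s l "l - 2"] incr_word_second[of s l "l - 2"]
    by (intro exI[of _ "incr_word s l (l - 2)"]) simp
qed (use assms in \<open>intro exI[of _ "[]"], simp\<close>)

lemma shift_second:
  assumes "3 \<le> s" "s < l" "i < s" "j < l"
  shows "\<exists>w. foldl (U_delta s) i w = i \<and> foldl (U_delta l) j w = (j + c) mod l"
proof (induction c)
  case 0
  show ?case using assms by (intro exI[of _ "[]"]) simp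
next
  case (Suc c)
  then obtain w where w: "foldl (U_delta s) i w = i" "foldl (U_delta l) j w = (j + c) mod l"
    by blast
  have "(j + c) mod l < l" using assms by simp
  then show ?case
    using w assms incr_word_first incr_word_step[of s l "(j + c) mod l"]
    by (intro exI[of _ "w @ incr_word s l ((j + c) mod l)"]) (simp add: mod_Suc_eq)
qed

lemma reach:
  assumes "3 \<le> s" "s < l" "i < s" "j < l" "i' < s" "j' < l"
  shows "\<exists>w. foldl (U_delta s) i w = i' \<and> foldl (U_delta l) j w = j'"
proof -
  define u where "u = replicate (i' + s - i) LA"
  define j1 where "j1 = foldl (U_delta l) j u"
  have "foldl (U_delta s) i u = i'" "j1 < l"
    using assms by (simp_all add: u_def j1_def foldl_U_replicate_LA)
  moreover obtain v where "foldl (U_delta s) i' v = i'"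
    "foldl (U_delta l) j1 v = (j1 + (j' + l - j1)) mod l"
    using shift_second[OF assms(1,2,5) \<open>j1 < l\<close>] by blast
  moreover have "(j1 + (j' + l - j1)) mod l = j'" using \<open>j1 < l\<close> assms by simp
  ultimately show ?thesis by (intro exI[of _ "u @ v"]) (simp add: j1_def)
qed

definition comb_accepts ::
    "(bool \<Rightarrow> bool \<Rightarrow> bool) \<Rightarrow> nat \<Rightarrow> nat \<Rightarrow> nat \<Rightarrow> nat \<Rightarrow> letter list \<Rightarrow> bool" where
  "comb_accepts f m n i j w \<longleftrightarrow> f (foldl (U_delta m) i w = m - 1) (foldl (U_delta n) j w = n - 1)"

definition comb_lang :: "(bool \<Rightarrow> bool \<Rightarrow> bool) \<Rightarrow> nat \<Rightarrow> nat \<Rightarrow> letter list set" where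
  "comb_lang f m n = {w. comb_accepts f m n 0 0 w}"

definition depends_on_both :: "(bool \<Rightarrow> bool \<Rightarrow> bool) \<Rightarrow> bool" where
  "depends_on_both f \<longleftrightarrow> (\<exists>x. f x True \<noteq> f x False) \<and> (\<exists>y. f True y \<noteq> f False y)"

lemma comb_accepts_append:
  "comb_accepts f m n i j (u @ z) = comb_accepts f m n (foldl (U_delta m) i u) (foldl (U_delta n) j u) z"
  by (simp add: comb_accepts_def)

lemma comb_lang_flip: "comb_lang f m n = comb_lang (\<lambda>x y. f y x) n m"
  by (simp add: comb_lang_def comb_accepts_def)

lemma depends_on_both_flip: "depends_on_both f \<Longrightarrow> depends_on_both (\<lambda>x y. f y x)"
  by (auto simp: depends_on_both_def)

(* Distinguishability of product states: states differing only in the second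
   component are separated by a word fixing the acceptance bit of the first. *)
lemma distinguish_same_first:
  assumes s: "3 \<le> s" "s < l" and "i < s" "j < l" "j' < l" "j \<noteq> j'" "depends_on_both f"
  shows "\<exists>z. comb_accepts f s l i j z \<noteq> comb_accepts f s l i j' z"
proof -
  obtain x where x: "f x True \<noteq> f x False"
    using \<open>depends_on_both f\<close> unfolding depends_on_both_def by blast
  define a where "a = (if x then s - 1 else 0)"
  have "a < s" "(a = s - 1) = x" using s by (auto simp: a_def)
  moreover obtain z where "foldl (U_delta s) i z = a" "foldl (U_delta l) j z = l - 1"
    using reach[OF s \<open>i < s\<close> \<open>j < l\<close> \<open>a < s\<close>, of "l - 1"] s by auto
  moreover have "foldl (U_delta l) j' z \<noteq> l - 1"
    using foldl_U_inj[of l j j' z] assms calculation by auto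
  ultimately show ?thesis using x by (intro exI[of _ z]) (auto simp: comb_accepts_def)
qed

lemma distinguish_same_second:
  assumes s: "3 \<le> s" "s < l" and "i < s" "i' < s" "j < l" "i \<noteq> i'" "depends_on_both f"
  shows "\<exists>z. comb_accepts f s l i j z \<noteq> comb_accepts f s l i' j z"
proof -
  obtain y where y: "f True y \<noteq> f False y"
    using \<open>depends_on_both f\<close> unfolding depends_on_both_def by blast
  define b where "b = (if y then l - 1 else 0)"
  have "b < l" "(b = l - 1) = y" using s by (auto simp: b_def)
  moreover obtain z where "foldl (U_delta s) i z = s - 1" "foldl (U_delta l) j z = b"
    using reach[OF s \<open>i < s\<close> \<open>j < l\<close> _ \<open>b < l\<close>, of "s - 1"] s by auto
  moreover have "foldl (U_delta s) i' z \<noteq> s - 1"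
    using foldl_U_inj[of s i i' z] assms calculation by auto
  ultimately show ?thesis using y by (intro exI[of _ z]) (auto simp: comb_accepts_def)
qed

(* When both components differ, f must separate one of the bit patterns
   TT/FF, TF/FF or FT/(?F), each of which can be produced by a suitable word. *)
lemma distinguish_both_differ:
  assumes s: "3 \<le> s" "s < l" and r: "i < s" "i' < s" "j < l" "j' < l"
    and "i \<noteq> i'" "j \<noteq> j'" "depends_on_both f"
  shows "\<exists>z. comb_accepts f s l i j z \<noteq> comb_accepts f s l i' j' z"
proof -
  have neq: "foldl (U_delta s) i z \<noteq> foldl (U_delta s) i' z"
    "foldl (U_delta l) j z \<noteq> foldl (U_delta l) j' z" for z
    using foldl_U_inj[of s i i' z] foldl_U_inj[of l j j' z] assms by auto
  have lt: "s - 1 < s" "l - 1 < l" "0 < s" "0 < l" using s by auto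
  consider "f True True \<noteq> f False False" | "f True False \<noteq> f False False"
    | "f False True \<noteq> f False False" "f False True \<noteq> f True False"
    using \<open>depends_on_both f\<close> unfolding depends_on_both_def by (metis (full_types))
  then show ?thesis
  proof cases
    case 1
    obtain z where "foldl (U_delta s) i z = s - 1" "foldl (U_delta l) j z = l - 1"
      using reach[OF s r(1,3) lt(1,2)] by blast
    then show ?thesis using 1 neq[of z] by (intro exI[of _ z]) (auto simp: comb_accepts_def)
  next
    case 2
    obtain z where z: "foldl (U_delta s) i z = s - 1" "foldl (U_delta l) j z = 0"
      using reach[OF s r(1,3) lt(1,4)] by blast
    define p where "p = foldl (U_delta s) i' z"
    define q where "q = foldl (U_delta l) j' z"
    have "p < s" "p \<noteq> s - 1" "q < l" "q \<noteq> 0"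
      using neq[of z] z s r foldl_U_lt by (auto simp: p_def q_def)
    then obtain u where u: "\<forall>i<s. foldl (U_delta s) i u = i" "foldl (U_delta l) 0 u = 0"
      "foldl (U_delta l) q u \<noteq> l - 1"
      using avoid_final[OF s] by blast
    have "comb_accepts f s l i j (z @ u) = f True False"
      using z u s by (simp add: comb_accepts_append) (simp add: comb_accepts_def)
    moreover have "comb_accepts f s l i' j' (z @ u) = f False False"
      using u \<open>p < s\<close> \<open>p \<noteq> s - 1\<close>
      by (simp add: comb_accepts_append flip: p_def q_def) (simp add: comb_accepts_def)
    ultimately show ?thesis using 2 by blast
  next
    case 3
    obtain z where "foldl (U_delta s) i z = 0" "foldl (U_delta l) j z = l - 1"
      using reach[OF s r(1,3) lt(3,2)] by blast
    then show ?thesis using 3 neq[of z] s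
      by (intro exI[of _ z]) (cases "foldl (U_delta s) i' z = s - 1"; simp add: comb_accepts_def)
  qed
qed

lemma distinguish:
  assumes "3 \<le> s" "s < l" "i < s" "j < l" "i' < s" "j' < l" "(i, j) \<noteq> (i', j')"
    and "depends_on_both f"
  shows "\<exists>z. comb_accepts f s l i j z \<noteq> comb_accepts f s l i' j' z"
  using assms distinguish_same_first[of s l i j j' f] distinguish_same_second[of s l i i' j f]
    distinguish_both_differ[of s l i i' j j' f]
  by (cases "i = i'"; cases "j = j'") auto

lemma dfa_states_ge_distinguishable:
  assumes dfa: "is_dfa_for k delta q0 F L"
    and dist: "\<And>p p'. p \<in> A \<Longrightarrow> p' \<in> A \<Longrightarrow> p \<noteq> p' \<Longrightarrow> \<exists>z. (W p @ z \<in> L) \<noteq> (W p' @ z \<in> L)"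
  shows "card A \<le> k"
proof -
  have q0: "q0 < k" and closed: "\<forall>q<k. \<forall>x. delta q x < k" and L: "L = {w. foldl delta q0 w \<in> F}"
    using dfa unfolding is_dfa_for_def by blast+
  have run_lt: "q < k \<Longrightarrow> foldl delta q w < k" for q w
    using closed by (induction w arbitrary: q) auto
  define g where "g p = foldl delta q0 (W p)" for p
  have "inj_on g A"
  proof (rule inj_onI, rule ccontr)
    fix p p' assume "p \<in> A" "p' \<in> A" "g p = g p'" "p \<noteq> p'"
    then have "(W p @ z \<in> L) = (W p' @ z \<in> L)" for z by (simp add: L g_def)
    then show False using dist \<open>p \<in> A\<close> \<open>p' \<in> A\<close> \<open>p \<noteq> p'\<close> by blast
  qed
  moreover have "g ` A \<subseteq> {..<k}" using q0 run_lt by (auto simp: g_def)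
  ultimately show ?thesis using card_inj_on_le[of g A "{..<k}"] by simp
qed

(* Lower bound: the mn reachable product states give mn distinguishable words. *)
lemma comb_lang_lower_bound:
  assumes s: "3 \<le> s" "s < l" and "depends_on_both f"
    and dfa: "is_dfa_for k delta q0 F (comb_lang f s l)"
  shows "s * l \<le> k"
proof -
  let ?A = "{..<s} \<times> {..<l}"
  have "\<forall>p\<in>?A. \<exists>w. foldl (U_delta s) 0 w = fst p \<and> foldl (U_delta l) 0 w = snd p"
    using reach[OF s] s by auto
  then obtain W where W: "\<forall>p\<in>?A. foldl (U_delta s) 0 (W p) = fst p \<and> foldl (U_delta l) 0 (W p) = snd p"
    by metis
  have "card ?A \<le> k"
  proof (rule dfa_states_ge_distinguishable[OF dfa])
    fix p p' assume "p \<in> ?A" "p' \<in> ?A" "p \<noteq> p'"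
    then have "fst p < s" "snd p < l" "fst p' < s" "snd p' < l" "(fst p, snd p) \<noteq> (fst p', snd p')"
      by auto
    then obtain z where "comb_accepts f s l (fst p) (snd p) z \<noteq> comb_accepts f s l (fst p') (snd p') z"
      using distinguish[OF s] \<open>depends_on_both f\<close> by blast
    then show "\<exists>z. (W p @ z \<in> comb_lang f s l) \<noteq> (W p' @ z \<in> comb_lang f s l)"
      using W \<open>p \<in> ?A\<close> \<open>p' \<in> ?A\<close> by (auto simp: comb_lang_def comb_accepts_append)
  qed
  then show ?thesis by simp
qed

(* The product DFA, with the pair (i, j) encoded as the number i * n + j. *)
definition prod_delta :: "nat \<Rightarrow> nat \<Rightarrow> nat \<Rightarrow> letter \<Rightarrow> nat" where
  "prod_delta m n q x = U_delta m (q div n) x * n + U_delta n (q mod n) x"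

lemma pair_index_lt: "i < m \<Longrightarrow> j < n \<Longrightarrow> i * n + j < m * (n::nat)"
  using mult_le_mono1[of "Suc i" m n] by simp

lemma foldl_prod_delta:
  "2 \<le> m \<Longrightarrow> 2 \<le> n \<Longrightarrow> i < m \<Longrightarrow> j < n \<Longrightarrow>
   foldl (prod_delta m n) (i * n + j) w = foldl (U_delta m) i w * n + foldl (U_delta n) j w"
proof (induction w arbitrary: i j)
  case (Cons x w)
  then show ?case using U_delta_lt by (simp add: prod_delta_def)
qed simp

lemma comb_lang_product_dfa:
  assumes "2 \<le> m" "2 \<le> n"
  shows "is_dfa_for (m * n) (prod_delta m n) 0
           {q. q < m * n \<and> f (q div n = m - 1) (q mod n = n - 1)} (comb_lang f m n)"
proof -
  have "prod_delta m n q x < m * n" if "q < m * n" for q x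
  proof -
    have "q div n < m" "q mod n < n" using that assms by (auto simp: less_mult_imp_div_less)
    then show ?thesis unfolding prod_delta_def using assms U_delta_lt pair_index_lt by blast
  qed
  moreover have "foldl (prod_delta m n) 0 w \<in> {q. q < m * n \<and> f (q div n = m - 1) (q mod n = n - 1)}
      \<longleftrightarrow> comb_accepts f m n 0 0 w" for w
  proof -
    define a where "a = foldl (U_delta m) 0 w"
    define b where "b = foldl (U_delta n) 0 w"
    have "a < m" "b < n" using assms foldl_U_lt by (auto simp: a_def b_def)
    moreover have "foldl (prod_delta m n) 0 w = a * n + b"
      using foldl_prod_delta[OF assms, of 0 0 w] assms by (simp add: a_def b_def)
    ultimately show ?thesis by (simp add: comb_accepts_def pair_index_lt flip: a_def b_def)
  qed
  ultimately show ?thesis using assms by (auto simp: is_dfa_for_def comb_lang_def)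
qed

lemma state_complexity_comb_lang:
  assumes "3 \<le> m" "3 \<le> n" "m \<noteq> n" "depends_on_both f"
  shows "state_complexity (comb_lang f m n) = m * n"
  unfolding state_complexity_def
proof (rule Least_equality)
  show "\<exists>delta q0 F. is_dfa_for (m * n) delta q0 F (comb_lang f m n)"
    using comb_lang_product_dfa[of m n f] assms by auto
next
  fix k assume "\<exists>delta q0 F. is_dfa_for k delta q0 F (comb_lang f m n)"
  then obtain delta q0 F where dfa: "is_dfa_for k delta q0 F (comb_lang f m n)" by blast
  show "m * n \<le> k"
  proof (cases "m < n")
    case True
    then show ?thesis using comb_lang_lower_bound assms dfa by blast
  next
    case False
    then have "n * m \<le> k"
      using comb_lang_lower_bound[of n m "\<lambda>x y. f y x"] assms dfa
      by (simp add: comb_lang_flip[of f m n] depends_on_both_flip)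
    then show ?thesis by (simp add: mult.commute)
  qed
qed

theorem theorem1:
  fixes m n :: nat
  assumes "m \<ge> 3" and "n \<ge> 3" and "m \<noteq> n"
  shows "state_complexity (U_lang m \<union> U_lang n) = m * n
       \<and> state_complexity (U_lang m \<inter> U_lang n) = m * n
       \<and> state_complexity (U_lang m - U_lang n) = m * n
       \<and> state_complexity (symdiff (U_lang m) (U_lang n)) = m * n"
proof -
  have "U_lang m \<union> U_lang n = comb_lang (\<or>) m n"
    and "U_lang m \<inter> U_lang n = comb_lang (\<and>) m n"
    and "U_lang m - U_lang n = comb_lang (\<lambda>x y. x \<and> \<not> y) m n"
    and "symdiff (U_lang m) (U_lang n) = comb_lang (\<noteq>) m n"
    by (auto simp: U_lang_def comb_lang_def comb_accepts_def symdiff_def)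
  moreover have "depends_on_both (\<or>)" "depends_on_both (\<and>)"
    "depends_on_both (\<lambda>x y. x \<and> \<not> y)" "depends_on_both (\<noteq>)"
    by (auto simp: depends_on_both_def)
  ultimately show ?thesis using state_complexity_comb_lang[OF assms] by simp
qed

end
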